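(* Let $I=[0,1]$. (i) If $f:I\to I$ is continuous and $(I,f)$ is topologically transitive, then $h_{A}(\hat f)=+\infty$ for any $A\in\mathcal{S}$. (ii) There exists a sequence $f_{0,\infty}=\{f_n\}_{n=0}^\infty$ of continuous self-maps of $I$ such that $(I,f_{0,\infty})$ is topologically transitive and $h_{A}(\hat f_{0,\infty})=0$ for some $A\in\mathcal{S}$.
   Context: $f_0^n=f_{n-1}\circ\cdots\circ f_0$, $f_0^0=\mathrm{id}$; for a single map $f$ take $f_n=f$ for all $n$. $(I,f_{0,\infty})$ is topologically transitive if for any nonempty open $U,V\subset I$ there is $n\ge1$ with $f_0^n(U)\cap V\ne\emptyset$. $\mathcal S$ is the set of strictly increasing sequences $A=\{a_i\}_{i\ge1}$ of nonnegative integers. For a compact metric space $Z$ and continuous self-maps $g_{0,\infty}$, $h_A(g_{0,\infty})=\sup_{\mathscr A}\limsup_{n\to\infty}\frac1n\log\mathcal N(\bigvee_{i=1}^n (g_0^{a_i})^{-1}\mathscr A)$ over finite open covers ($\bigvee$ = common refinement, $\mathcal N$ = minimal cardinality of a subcover). $\mathcal M(I)$ is the space of Borel probability measures on $I$ with the weak$^*$ topology (compact metric, e.g. via the Prohorov metric), and $\hat f_n(\mu)(B)=\mu(f_n^{-1}(B))$. *)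

theory Defs
  imports "HOL-Probability.Probability"
begin

abbreviation unitI :: "real set" where "unitI \<equiv> {0..1}"

fun comp_seq :: "(nat \<Rightarrow> 'a \<Rightarrow> 'a) \<Rightarrow> nat \<Rightarrow> 'a \<Rightarrow> 'a" where
  "comp_seq g 0 = id"
| "comp_seq g (Suc n) = g n \<circ> comp_seq g n"

definition top_transitive :: "(nat \<Rightarrow> real \<Rightarrow> real) \<Rightarrow> bool" where
  "top_transitive fs \<longleftrightarrow>
     (\<forall>U V. openin (top_of_set unitI) U \<and> U \<noteq> {} \<and> openin (top_of_set unitI) V \<and> V \<noteq> {}
        \<longrightarrow> (\<exists>n\<ge>1. comp_seq fs n ` U \<inter> V \<noteq> {}))"

definition open_covers :: "'a topology \<Rightarrow> 'a set set set" where
  "open_covers X = {\<A>. finite \<A> \<and> (\<forall>U\<in>\<A>. openin X U) \<and> \<Union>\<A> = topspace X}"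

definition cover_num :: "'a topology \<Rightarrow> 'a set set \<Rightarrow> nat" where
  "cover_num X \<U> = (LEAST k. \<exists>\<V>\<subseteq>\<U>. finite \<V> \<and> \<Union>\<V> = topspace X \<and> card \<V> = k)"

text \<open>The join of the pulled-back covers (g_0^{a_i})^{-1} A over the first n terms of A.
  The sequence a_1 < a_2 < ... is represented by A 0 < A 1 < ... (a_(i+1) = A i).\<close>
definition join_pre :: "'a topology \<Rightarrow> (nat \<Rightarrow> 'a \<Rightarrow> 'a) \<Rightarrow> (nat \<Rightarrow> nat) \<Rightarrow> 'a set set \<Rightarrow> nat \<Rightarrow> 'a set set" where
  "join_pre X g A \<A> n =
     {topspace X \<inter> (\<Inter>i<n. comp_seq g (A i) -` C i) | C. \<forall>i<n. C i \<in> \<A>}"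

definition seq_entropy :: "'a topology \<Rightarrow> (nat \<Rightarrow> 'a \<Rightarrow> 'a) \<Rightarrow> (nat \<Rightarrow> nat) \<Rightarrow> ereal" where
  "seq_entropy X g A =
     (SUP \<A>\<in>open_covers X. limsup (\<lambda>n. ereal (ln (real (cover_num X (join_pre X g A \<A> n))) / real n)))"

abbreviation borelI :: "real measure" where "borelI \<equiv> restrict_space borel unitI"

definition probI :: "real measure set" where
  "probI = {\<mu>. prob_space \<mu> \<and> sets \<mu> = sets borelI}"

definition weak_star :: "real measure topology" where
  "weak_star = topology_generated_by
     {{\<mu>\<in>probI. (\<integral>x. \<phi> x \<partial>\<mu>) \<in> U} | (\<phi> :: real \<Rightarrow> real) (U :: real set). continuous_on unitI \<phi> \<and> open U}"

definition hat :: "(real \<Rightarrow> real) \<Rightarrow> real measure \<Rightarrow> real measure" where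
  "hat f \<mu> = distr \<mu> borelI f"

end

theory Submission
  imports Defs
begin

text \<open>
  (i) A transitive interval map f has an iterate f^p with a horseshoe: disjoint closed intervals
  J_0, J_1, each mapped by f^p over both. (Transitivity forces an interior fixed point z; if z has
  a second interior preimage, transitivity folds an iterate over it; otherwise f swaps the two
  sides of z, and the argument is repeated for f^2 on one side, where z is an end point.)
  Hence at times in one residue class mod p every itinerary through J_0, J_1 is realised, and
  averaging K such orbits yields measures whose pushforwards integrate a continuous function
  separating J_0 from J_1 to any prescribed values c/K, c = 0..K. So the n-th join of one finite
  cover of M(I) by level sets of that integral has at least (K+1)^(n/p) members, and the sequence
  entropy of the induced map is at least log (K+1) / p for every K.

  (ii) With q_k enumerating the positive rationals, take f_2k x = x^q_k and f_(2k+1) x = x^(1/q_k).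
  Then f_0^(2k) = id, so along A = (2i) the joins do not grow, while f_0^(2k+1) x = x^q_k moves any
  x in (0, 1) into any open subinterval.
\<close>

lemma comp_seq_const: "comp_seq (\<lambda>n. g) = (\<lambda>n. g ^^ n)"
proof
  show "comp_seq (\<lambda>n. g) n = g ^^ n" for n
    by (induction n) auto
qed

lemma funpow_image_subset: "g ` S \<subseteq> S \<Longrightarrow> (g ^^ n) ` S \<subseteq> S"
  by (induction n) (auto simp: image_subset_iff)

lemma continuous_on_funpow:
  assumes "continuous_on S g" "g ` S \<subseteq> S"
  shows "continuous_on S (g ^^ n)"
proof (induction n)
  case (Suc n)
  then show ?case
    using funpow_image_subset[OF assms(2), of n]
    by (auto intro: continuous_on_compose2[OF assms(1)])
qed (simp add: continuous_on_id)

lemma funpow_image_eq: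
  assumes "g ` S = S"
  shows "(g ^^ n) ` S = S"
proof (induction n)
  case (Suc n)
  have "(g ^^ Suc n) ` S = g ` ((g ^^ n) ` S)"
    by (simp add: image_comp)
  with Suc.IH assms show ?case
    by simp
qed simp

lemma funpow_fixed_point: "g z = z \<Longrightarrow> (g ^^ n) z = z"
  by (induction n) auto

lemma funpow_alternating:
  assumes "g ` L \<subseteq> R" "g ` R \<subseteq> L" "x \<in> L"
  shows "(g ^^ (2 * m)) x \<in> L \<and> (g ^^ Suc (2 * m)) x \<in> R"
proof (induction m)
  case 0
  then show ?case
    using assms by auto
next
  case (Suc m)
  then have "(g ^^ (2 * Suc m)) x \<in> L"
    using assms(2) by (auto simp: numeral_2_eq_2)
  then show ?case
    using assms(1) by auto
qed

section \<open>Measures on the unit interval\<close>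

lemma space_borelI [simp]: "space borelI = unitI"
  by (simp add: space_restrict_space)

lemma measurable_borelI:
  assumes "continuous_on unitI g" "g ` unitI \<subseteq> unitI"
  shows "g \<in> borelI \<rightarrow>\<^sub>M borelI"
  by (rule measurable_restrict_space2) (use assms borel_measurable_continuous_on_restrict in auto)

lemma sets_probI: "\<mu> \<in> probI \<Longrightarrow> sets \<mu> = sets borelI"
  by (simp add: probI_def)

lemma space_probI: "\<mu> \<in> probI \<Longrightarrow> space \<mu> = unitI"
  using sets_eq_imp_space_eq[OF sets_probI] by simp

lemma measurable_probI: "\<mu> \<in> probI \<Longrightarrow> g \<in> borelI \<rightarrow>\<^sub>M N \<Longrightarrow> g \<in> \<mu> \<rightarrow>\<^sub>M N"
  using measurable_cong_sets[OF sets_probI refl] by blast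

lemma topspace_weak_star: "topspace weak_star = probI"
proof -
  have "probI = {\<mu>\<in>probI. (\<integral>x. 0 \<partial>\<mu>) \<in> (UNIV :: real set)}"
    by simp
  then show ?thesis
    unfolding weak_star_def topology_generated_by_topspace by blast
qed

lemma openin_weak_star_integral:
  fixes \<phi> :: "real \<Rightarrow> real"
  assumes "continuous_on unitI \<phi>" "open U"
  shows "openin weak_star {\<mu>\<in>probI. (\<integral>x. \<phi> x \<partial>\<mu>) \<in> U}"
  unfolding weak_star_def by (rule topology_generated_by_Basis) (use assms in blast)

lemma hat_in_probI: "\<mu> \<in> probI \<Longrightarrow> g \<in> borelI \<rightarrow>\<^sub>M borelI \<Longrightarrow> hat g \<mu> \<in> probI"
  unfolding hat_def by (auto simp: probI_def intro!: prob_space.prob_space_distr measurable_probI)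

lemma hat_hat:
  assumes "\<mu> \<in> probI" "g \<in> borelI \<rightarrow>\<^sub>M borelI" "h \<in> borelI \<rightarrow>\<^sub>M borelI"
  shows "hat h (hat g \<mu>) = hat (h \<circ> g) \<mu>"
  unfolding hat_def by (rule distr_distr[OF assms(3) measurable_probI[OF assms(1,2)]])

lemma hat_eq_self:
  assumes "\<mu> \<in> probI" "\<And>x. x \<in> unitI \<Longrightarrow> g x = x"
  shows "hat g \<mu> = \<mu>"
proof -
  have "hat g \<mu> = distr \<mu> borelI (\<lambda>x. x)"
    unfolding hat_def by (rule distr_cong) (auto simp: space_probI[OF assms(1)] assms(2))
  also have "\<dots> = \<mu>"
    by (rule distr_id2) (simp add: sets_probI[OF assms(1)])
  finally show ?thesis .
qed

lemma measurable_comp_seq: "(\<And>n. fs n \<in> M \<rightarrow>\<^sub>M M) \<Longrightarrow> comp_seq fs t \<in> M \<rightarrow>\<^sub>M M"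
  by (induction t) auto

lemma comp_seq_hat:
  assumes "\<And>n. fs n \<in> borelI \<rightarrow>\<^sub>M borelI" "\<mu> \<in> probI"
  shows "comp_seq (\<lambda>n. hat (fs n)) t \<mu> = hat (comp_seq fs t) \<mu>"
proof (induction t)
  case 0
  show ?case
    using hat_eq_self[OF assms(2)] by simp
next
  case (Suc t)
  then show ?case
    using hat_hat[OF assms(2) measurable_comp_seq[OF assms(1)] assms(1)] by (simp add: o_def)
qed

definition empirical_measure :: "nat \<Rightarrow> (nat \<Rightarrow> real) \<Rightarrow> real measure" where
  "empirical_measure K X = distr (measure_pmf (pmf_of_set {..<K})) borelI X"

lemma measurable_points_unitI: "(\<And>j. X j \<in> unitI) \<Longrightarrow> X \<in> measure_pmf Q \<rightarrow>\<^sub>M borelI"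
  by (auto simp: measurable_pmf_measure1)

lemma empirical_measure_in_probI: "(\<And>j. X j \<in> unitI) \<Longrightarrow> empirical_measure K X \<in> probI"
  unfolding probI_def empirical_measure_def
  by (auto intro!: measure_pmf.prob_space_distr measurable_points_unitI)

lemma hat_empirical_measure:
  assumes "\<And>j. X j \<in> unitI" "g \<in> borelI \<rightarrow>\<^sub>M borelI"
  shows "hat g (empirical_measure K X) = empirical_measure K (g \<circ> X)"
  unfolding hat_def empirical_measure_def
  by (rule distr_distr[OF assms(2) measurable_points_unitI[OF assms(1)]])

lemma integral_empirical_measure:
  fixes \<phi> :: "real \<Rightarrow> real"
  assumes "K > 0" "\<And>j. X j \<in> unitI" "continuous_on unitI \<phi>"
  shows "(\<integral>x. \<phi> x \<partial>empirical_measure K X) = (\<Sum>j<K. \<phi> (X j)) / K"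
proof -
  have "(\<integral>x. \<phi> x \<partial>empirical_measure K X) = (\<integral>j. \<phi> (X j) \<partial>measure_pmf (pmf_of_set {..<K}))"
    unfolding empirical_measure_def
    by (rule integral_distr[OF measurable_points_unitI[OF assms(2)]])
       (rule borel_measurable_continuous_on_restrict[OF assms(3)])
  also have "\<dots> = (\<Sum>j<K. \<phi> (X j)) / K"
    using assms(1) by (subst integral_pmf_of_set) auto
  finally show ?thesis .
qed

section \<open>Sequence entropy\<close>

lemma cover_num_le:
  assumes "\<V> \<subseteq> \<U>" "finite \<V>" "\<Union>\<V> = topspace X"
  shows "cover_num X \<U> \<le> card \<V>"
  unfolding cover_num_def by (rule Least_le) (use assms in blast)

lemma card_le_cover_num:
  assumes "finite \<U>" "\<Union>\<U> = topspace X" "x ` P \<subseteq> topspace X"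
    and separated: "\<And>W i j. W \<in> \<U> \<Longrightarrow> i \<in> P \<Longrightarrow> j \<in> P \<Longrightarrow> x i \<in> W \<Longrightarrow> x j \<in> W \<Longrightarrow> i = j"
  shows "card P \<le> cover_num X \<U>"
proof -
  have "\<exists>\<V>\<subseteq>\<U>. finite \<V> \<and> \<Union>\<V> = topspace X \<and> card \<V> = cover_num X \<U>"
    unfolding cover_num_def by (rule LeastI_ex) (use assms(1,2) in blast)
  then obtain \<V> where \<V>: "\<V> \<subseteq> \<U>" "\<Union>\<V> = topspace X" "card \<V> = cover_num X \<U>"
    by blast
  have "\<forall>i\<in>P. \<exists>W\<in>\<V>. x i \<in> W"
    using assms(3) \<V>(2) by blast
  then obtain W where W: "\<And>i. i \<in> P \<Longrightarrow> W i \<in> \<V> \<and> x i \<in> W i"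
    by metis
  have "inj_on W P"
  proof (rule inj_onI)
    fix i j assume "i \<in> P" "j \<in> P" "W i = W j"
    then show "i = j"
      using W \<V>(1) separated[of "W i" i j] by auto
  qed
  then have "card P \<le> card \<V>"
    by (rule card_inj_on_le) (use W finite_subset[OF \<V>(1) assms(1)] in auto)
  with \<V>(3) show ?thesis
    by simp
qed

lemma join_preE:
  assumes "W \<in> join_pre X g A \<A> n"
  obtains C where "\<And>i. i < n \<Longrightarrow> C i \<in> \<A>"
    "\<And>x i. x \<in> W \<Longrightarrow> i < n \<Longrightarrow> comp_seq g (A i) x \<in> C i"
  using assms unfolding join_pre_def by blast

lemma join_pre_finite_cover:
  assumes "finite \<A>" "\<Union>\<A> = topspace X"
    and orbit: "\<And>t x. x \<in> topspace X \<Longrightarrow> comp_seq g t x \<in> topspace X"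
  shows "finite (join_pre X g A \<A> n)" "\<Union>(join_pre X g A \<A> n) = topspace X"
proof -
  define F where "F C = topspace X \<inter> (\<Inter>i<n. comp_seq g (A i) -` C i)" for C
  have "join_pre X g A \<A> n \<subseteq> F ` (PiE {..<n} (\<lambda>_. \<A>))"
  proof
    fix W assume "W \<in> join_pre X g A \<A> n"
    then obtain C where C: "\<forall>i<n. C i \<in> \<A>" "W = F C"
      by (auto simp: join_pre_def F_def)
    then have "W = F (restrict C {..<n})" "restrict C {..<n} \<in> PiE {..<n} (\<lambda>_. \<A>)"
      by (auto simp: F_def)
    then show "W \<in> F ` (PiE {..<n} (\<lambda>_. \<A>))"
      by blast
  qed
  then show "finite (join_pre X g A \<A> n)"
    by (rule finite_subset) (simp add: assms(1) finite_PiE)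
  have "x \<in> \<Union>(join_pre X g A \<A> n)" if x: "x \<in> topspace X" for x
  proof -
    have "\<forall>i. \<exists>D\<in>\<A>. comp_seq g (A i) x \<in> D"
      using orbit[OF x] assms(2) by blast
    then obtain C where C: "\<And>i. C i \<in> \<A> \<and> comp_seq g (A i) x \<in> C i"
      by metis
    then have "x \<in> F C" "F C \<in> join_pre X g A \<A> n"
      using x by (auto simp: F_def join_pre_def)
    then show ?thesis
      by blast
  qed
  then show "\<Union>(join_pre X g A \<A> n) = topspace X"
    by (auto simp: join_pre_def)
qed

lemma limsup_ln_over_n_eq_0:
  fixes k :: "nat \<Rightarrow> nat"
  assumes "\<forall>\<^sub>F n in sequentially. k n \<le> c"
  shows "limsup (\<lambda>n. ereal (ln (real (k n)) / real n)) = 0"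
proof -
  have ln_nonneg: "0 \<le> ln (real m)" for m :: nat
    by (cases "m = 0") auto
  have "(\<lambda>n. ln (real (k n)) / real n) \<longlonglongrightarrow> 0"
  proof (rule real_tendsto_sandwich)
    show "\<forall>\<^sub>F n in sequentially. 0 \<le> ln (real (k n)) / real n"
      by (rule always_eventually) (simp add: ln_nonneg)
    show "\<forall>\<^sub>F n in sequentially. ln (real (k n)) / real n \<le> ln (real c) / real n"
      using assms
    proof eventually_elim
      case (elim n)
      then show ?case
        by (cases "k n = 0") (auto intro!: divide_right_mono simp: ln_nonneg)
    qed
  qed (auto intro: lim_const_over_n)
  then have "(\<lambda>n. ereal (ln (real (k n)) / real n)) \<longlonglongrightarrow> 0"
    using tendsto_ereal[of _ 0] by (simp add: zero_ereal_def)
  then show ?thesis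
    by (rule lim_imp_Limsup[OF trivial_limit_sequentially])
qed

lemma seq_entropy_eq_0_if_identity:
  assumes "\<And>i x. x \<in> topspace X \<Longrightarrow> comp_seq g (A i) x = x"
  shows "seq_entropy X g A = 0"
proof -
  have "cover_num X (join_pre X g A \<A> n) \<le> card \<A>"
    if "\<A> \<in> open_covers X" "n > 0" for \<A> n
  proof -
    have fin: "finite \<A>" and cover: "\<Union>\<A> = topspace X"
      using that(1) by (auto simp: open_covers_def)
    have "topspace X \<inter> C \<in> join_pre X g A \<A> n" if "C \<in> \<A>" for C
    proof -
      have "topspace X \<inter> C = topspace X \<inter> (\<Inter>i<n. comp_seq g (A i) -` C)"
        using assms \<open>n > 0\<close> by auto
      then show ?thesis
        unfolding join_pre_def using that by (intro CollectI exI[of _ "\<lambda>_. C"]) auto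
    qed
    then have "(\<lambda>C. topspace X \<inter> C) ` \<A> \<subseteq> join_pre X g A \<A> n"
      by blast
    then have "cover_num X (join_pre X g A \<A> n) \<le> card ((\<lambda>C. topspace X \<inter> C) ` \<A>)"
      by (rule cover_num_le) (use fin cover in auto)
    also have "\<dots> \<le> card \<A>"
      using fin by (rule card_image_le)
    finally show ?thesis .
  qed
  then have "limsup (\<lambda>n. ereal (ln (real (cover_num X (join_pre X g A \<A> n))) / real n)) = 0"
    if "\<A> \<in> open_covers X" for \<A>
    using that by (intro limsup_ln_over_n_eq_0[where c = "card \<A>"] eventually_sequentiallyI[of 1]) auto
  moreover have "{topspace X} \<in> open_covers X"
    by (simp add: open_covers_def)
  then have "open_covers X \<noteq> {}"
    by blast
  ultimately show ?thesis
    unfolding seq_entropy_def by (simp cong: SUP_cong)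
qed

lemma seq_entropy_ge:
  assumes "\<A> \<in> open_covers X"
    and "\<forall>\<^sub>F n in sequentially. c \<le> ln (real (cover_num X (join_pre X g A \<A> n))) / real n"
  shows "ereal c \<le> seq_entropy X g A"
proof -
  have "ereal c \<le> limsup (\<lambda>n. ereal (ln (real (cover_num X (join_pre X g A \<A> n))) / real n))"
    by (rule le_Limsup) (use assms(2) in auto)
  also have "\<dots> \<le> seq_entropy X g A"
    unfolding seq_entropy_def by (rule SUP_upper[OF assms(1)])
  finally show ?thesis .
qed

lemma pigeonhole_fiber_card:
  fixes k :: "nat \<Rightarrow> nat"
  assumes "p > 0" "\<And>i. k i < p"
  shows "\<exists>r<p. n \<le> p * card {i. i < n \<and> k i = r}"
proof (rule ccontr)
  assume "\<not> ?thesis"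
  then have small: "p * card {i. i < n \<and> k i = r} < n" if "r < p" for r
    using that by auto
  have "{..<n} = (\<Union>r<p. {i. i < n \<and> k i = r})"
    using assms(2) by auto
  then have "n = (\<Sum>r<p. card {i. i < n \<and> k i = r})"
    by (subst card_lessThan[symmetric], simp only:, subst card_UN_disjoint) auto
  then have "p * n = (\<Sum>r<p. p * card {i. i < n \<and> k i = r})"
    by (metis sum_distrib_left)
  also have "\<dots> < (\<Sum>r<p. n)"
    using assms(1) small by (intro sum_strict_mono) auto
  finally show False
    by simp
qed

section \<open>Topologically transitive interval maps\<close>

definition transitive_on :: "'a::topological_space set \<Rightarrow> (nat \<Rightarrow> 'a \<Rightarrow> 'a) \<Rightarrow> bool" where
  "transitive_on S F \<longleftrightarrow>
     (\<forall>U V. openin (top_of_set S) U \<and> U \<noteq> {} \<and> openin (top_of_set S) V \<and> V \<noteq> {}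
        \<longrightarrow> (\<exists>n\<ge>1. F n ` U \<inter> V \<noteq> {}))"

lemma top_transitive_iff_transitive_on: "top_transitive fs \<longleftrightarrow> transitive_on unitI (comp_seq fs)"
  by (simp add: top_transitive_def transitive_on_def)

lemma openin_Icc_contains_interval:
  fixes \<alpha> \<beta> :: real
  assumes "\<alpha> < \<beta>" "openin (top_of_set {\<alpha>..\<beta>}) V" "v \<in> V"
  obtains a b where "\<alpha> \<le> a" "a < b" "b \<le> \<beta>" "{a<..<b} \<subseteq> V"
proof -
  obtain e where e: "e > 0" "\<And>x. x \<in> {\<alpha>..\<beta>} \<Longrightarrow> dist x v < e \<Longrightarrow> x \<in> V"
    using assms(2,3) unfolding openin_euclidean_subtopology_iff by blast
  have v: "v \<in> {\<alpha>..\<beta>}"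
    using openin_subset[OF assms(2)] assms(3) by auto
  have "{max \<alpha> (v - e)<..<min \<beta> (v + e)} \<subseteq> V"
  proof
    fix x assume "x \<in> {max \<alpha> (v - e)<..<min \<beta> (v + e)}"
    then have "x \<in> {\<alpha>..\<beta>}" "dist x v < e"
      by (auto simp: dist_real_def)
    then show "x \<in> V"
      by (rule e(2))
  qed
  moreover have "max \<alpha> (v - e) < min \<beta> (v + e)"
    using assms(1) e(1) v by auto
  ultimately show ?thesis
    by (intro that) auto
qed

lemma transitive_on_IccI:
  fixes \<alpha> \<beta> :: real
  assumes "\<alpha> < \<beta>"
    and intervals: "\<And>a b c d. \<alpha> \<le> a \<Longrightarrow> a < b \<Longrightarrow> b \<le> \<beta> \<Longrightarrow> \<alpha> \<le> c \<Longrightarrow> c < d \<Longrightarrow> d \<le> \<beta> \<Longrightarrow>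
      \<exists>n\<ge>1. \<exists>x. a < x \<and> x < b \<and> c < F n x \<and> F n x < d"
  shows "transitive_on {\<alpha>..\<beta>} F"
  unfolding transitive_on_def
proof (intro allI impI)
  fix U V
  assume "openin (top_of_set {\<alpha>..\<beta>}) U \<and> U \<noteq> {} \<and> openin (top_of_set {\<alpha>..\<beta>}) V \<and> V \<noteq> {}"
  then obtain u v where U: "openin (top_of_set {\<alpha>..\<beta>}) U" "u \<in> U"
    and V: "openin (top_of_set {\<alpha>..\<beta>}) V" "v \<in> V"
    by blast
  obtain a b where ab: "\<alpha> \<le> a" "a < b" "b \<le> \<beta>" "{a<..<b} \<subseteq> U"
    by (rule openin_Icc_contains_interval[OF assms(1) U])
  obtain c d where cd: "\<alpha> \<le> c" "c < d" "d \<le> \<beta>" "{c<..<d} \<subseteq> V"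
    by (rule openin_Icc_contains_interval[OF assms(1) V])
  obtain n x where "n \<ge> 1" "a < x" "x < b" "c < F n x" "F n x < d"
    using intervals[OF ab(1-3) cd(1-3)] by blast
  then have "F n x \<in> F n ` U \<inter> V"
    using ab(4) cd(4) by auto
  with \<open>n \<ge> 1\<close> show "\<exists>n\<ge>1. F n ` U \<inter> V \<noteq> {}"
    by blast
qed

lemma transitive_on_IccE:
  fixes \<alpha> \<beta> :: real
  assumes "transitive_on {\<alpha>..\<beta>} F" "\<alpha> \<le> a" "a < b" "b \<le> \<beta>" "\<alpha> \<le> c" "c < d" "d \<le> \<beta>"
  obtains n x where "n \<ge> 1" "a < x" "x < b" "c < F n x" "F n x < d"
proof -
  have "openin (top_of_set {\<alpha>..\<beta>}) {a<..<b}" "openin (top_of_set {\<alpha>..\<beta>}) {c<..<d}"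
    using assms by (auto intro!: open_subset)
  moreover have "{a<..<b} \<noteq> {}" "{c<..<d} \<noteq> {}"
    using assms by auto
  ultimately obtain n where "n \<ge> 1" "F n ` {a<..<b} \<inter> {c<..<d} \<noteq> {}"
    using assms(1) unfolding transitive_on_def by blast
  then obtain x where "x \<in> {a<..<b}" "F n x \<in> {c<..<d}"
    by blast
  then show ?thesis
    using that[OF \<open>n \<ge> 1\<close>, of x] by simp
qed

lemma transitive_on_Icc_no_invariant_set:
  fixes \<alpha> \<beta> :: real
  assumes "transitive_on {\<alpha>..\<beta>} (\<lambda>n. g ^^ n)" "g ` S \<subseteq> S"
    and "\<alpha> \<le> a" "a < b" "b \<le> \<beta>" "{a<..<b} \<subseteq> S"
    and "\<alpha> \<le> c" "c < d" "d \<le> \<beta>" "{c<..<d} \<inter> S = {}"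
  shows False
proof -
  obtain n x where "a < x" "x < b" "c < (g ^^ n) x" "(g ^^ n) x < d"
    by (rule transitive_on_IccE[OF assms(1,3,4,5,7,8,9)])
  then have "x \<in> S" "(g ^^ n) x \<in> {c<..<d}"
    using assms(6) by auto
  then show False
    using funpow_image_subset[OF assms(2), of n] assms(10) by blast
qed

lemma transitive_on_Icc_no_invariant_subinterval:
  fixes \<alpha> \<beta> :: real
  assumes "transitive_on {\<alpha>..\<beta>} (\<lambda>n. g ^^ n)" "g ` {a..b} \<subseteq> {a..b}"
    and "\<alpha> \<le> a" "a < b" "b \<le> \<beta>" "\<alpha> < a \<or> b < \<beta>"
  shows False
proof (cases "\<alpha> < a")
  case True
  show False
    by (rule transitive_on_Icc_no_invariant_set[OF assms(1,2), of a b \<alpha> a]) (use assms True in auto)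
next
  case False
  show False
    by (rule transitive_on_Icc_no_invariant_set[OF assms(1,2), of a b b \<beta>]) (use assms False in auto)
qed

lemma IVT_sign_constant:
  fixes h :: "real \<Rightarrow> real"
  assumes "continuous_on {a..b} h" "\<And>x. a < x \<Longrightarrow> x < b \<Longrightarrow> h x \<noteq> 0"
  shows "(\<forall>x\<in>{a..b}. 0 \<le> h x) \<or> (\<forall>x\<in>{a..b}. h x \<le> 0)"
proof (rule ccontr)
  assume "\<not> ?thesis"
  then obtain x y where xy: "x \<in> {a..b}" "y \<in> {a..b}" "h x < 0" "0 < h y"
    by force
  let ?L = "{min x y..max x y}"
  have "connected (h ` ?L)"
    by (rule connected_continuous_image[OF continuous_on_subset[OF assms(1)]]) (use xy in auto)
  then have "{h x..h y} \<subseteq> h ` ?L"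
    by (rule connected_contains_Icc) auto
  then have "0 \<in> h ` ?L"
    using xy by auto
  then obtain w where w: "w \<in> ?L" "h w = 0"
    by (metis imageE)
  then have "w \<noteq> x" "w \<noteq> y"
    using xy by auto
  with w(1) xy(1,2) have "a < w" "w < b"
    by auto
  with assms(2) w(2) show False
    by blast
qed

lemma transitive_on_Icc_fixed_point:
  fixes g :: "real \<Rightarrow> real"
  assumes "\<alpha> < \<beta>" "continuous_on {\<alpha>..\<beta>} g" "g ` {\<alpha>..\<beta>} \<subseteq> {\<alpha>..\<beta>}"
    and trans: "transitive_on {\<alpha>..\<beta>} (\<lambda>n. g ^^ n)"
  obtains z where "\<alpha> < z" "z < \<beta>" "g z = z"
proof (rule ccontr)
  assume "\<not> thesis"
  with that have "(\<forall>x\<in>{\<alpha>..\<beta>}. 0 \<le> g x - x) \<or> (\<forall>x\<in>{\<alpha>..\<beta>}. g x - x \<le> 0)"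
    by (intro IVT_sign_constant continuous_on_diff assms(2) continuous_on_id) fastforce
  moreover define m where "m = (\<alpha> + \<beta>) / 2"
  moreover have m: "\<alpha> < m" "m < \<beta>"
    using assms(1) by (auto simp: m_def)
  ultimately consider "g ` {m..\<beta>} \<subseteq> {m..\<beta>}" | "g ` {\<alpha>..m} \<subseteq> {\<alpha>..m}"
    using assms(3) unfolding image_subset_iff by (smt (verit) atLeastAtMost_iff)
  then show False
  proof cases
    case 1
    then show False
      by (rule transitive_on_Icc_no_invariant_subinterval[OF trans]) (use m in auto)
  next
    case 2
    then show False
      by (rule transitive_on_Icc_no_invariant_subinterval[OF trans]) (use m in auto)
  qed
qed

definition horseshoe_on :: "real set \<Rightarrow> (real \<Rightarrow> real) \<Rightarrow> bool" where
  "horseshoe_on S h \<longleftrightarrow> (\<exists>a0 b0 a1 b1. a0 < b0 \<and> b0 < a1 \<and> a1 < b1 \<and> {a0..b1} \<subseteq> S \<and>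
     {a0..b0} \<union> {a1..b1} \<subseteq> h ` {a0..b0} \<and> {a0..b0} \<union> {a1..b1} \<subseteq> h ` {a1..b1})"

lemma horseshoe_on_mono: "horseshoe_on S h \<Longrightarrow> S \<subseteq> T \<Longrightarrow> horseshoe_on T h"
  unfolding horseshoe_on_def by blast

lemma Icc_subset_continuous_image:
  fixes G :: "real \<Rightarrow> real"
  assumes "continuous_on {a..b} G" "a \<le> b"
  shows "{min (G a) (G b)..max (G a) (G b)} \<subseteq> G ` {a..b}"
proof -
  have "connected (G ` {a..b})"
    by (rule connected_continuous_image[OF assms(1)]) simp
  then show ?thesis
    by (rule connected_contains_Icc) (use assms(2) in \<open>auto simp: min_def max_def\<close>)
qed

lemma horseshoe_on_if_fold:
  fixes G :: "real \<Rightarrow> real"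
  assumes cont: "continuous_on {p..q} G" and "p < u" "u < q" "{p..q} \<subseteq> S"
    and fold: "(G u < p \<and> q \<le> G p \<and> q \<le> G q) \<or> (q < G u \<and> G p \<le> p \<and> G q \<le> p)"
  shows "horseshoe_on S G"
proof -
  define \<epsilon> where "\<epsilon> = (if G u < p then p - G u else G u - q)"
  have "\<epsilon> > 0"
    using fold by (auto simp: \<epsilon>_def)
  then obtain \<delta> where "\<delta> > 0" and \<delta>: "\<And>x. x \<in> {p..q} \<Longrightarrow> dist x u < \<delta> \<Longrightarrow> dist (G x) (G u) < \<epsilon>"
    using cont \<open>p < u\<close> \<open>u < q\<close> unfolding continuous_on_iff by (meson atLeastAtMost_iff less_imp_le)
  have spans: "{p..q} \<subseteq> {min (G v) (G x)..max (G v) (G x)}"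
    if "v = p \<or> v = q" "x \<in> {p..q}" "dist x u < \<delta>" for v x
  proof -
    have "\<bar>G x - G u\<bar> < \<epsilon>"
      using \<delta>[OF that(2,3)] by (simp add: dist_real_def)
    then have "(G x < p \<and> q \<le> G v) \<or> (q < G x \<and> G v \<le> p)"
      using fold that(1) \<open>p < u\<close> \<open>u < q\<close> unfolding \<epsilon>_def by (cases "G u < p") auto
    then show ?thesis
      by auto
  qed
  define m where "m = min \<delta> (min (u - p) (q - u))"
  have m: "0 < m" "m \<le> \<delta>" "m \<le> u - p" "m \<le> q - u"
    using \<open>\<delta> > 0\<close> \<open>p < u\<close> \<open>u < q\<close> by (auto simp: m_def)
  define u1 where "u1 = u - m / 2"
  define u2 where "u2 = u + m / 2"
  have u12: "p < u1" "u1 < u2" "u2 < q"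
    using m by (auto simp: u1_def u2_def)
  have "dist u1 u < \<delta>" "dist u2 u < \<delta>"
    using m by (auto simp: u1_def u2_def dist_real_def)
  then have "{p..q} \<subseteq> {min (G p) (G u1)..max (G p) (G u1)}" "{p..q} \<subseteq> {min (G q) (G u2)..max (G q) (G u2)}"
    using u12 by (intro spans; simp)+
  moreover have "{min (G p) (G u1)..max (G p) (G u1)} \<subseteq> G ` {p..u1}"
    "{min (G u2) (G q)..max (G u2) (G q)} \<subseteq> G ` {u2..q}"
    using u12 by (intro Icc_subset_continuous_image continuous_on_subset[OF cont]; simp)+
  ultimately have "{p..q} \<subseteq> G ` {p..u1}" "{p..q} \<subseteq> G ` {u2..q}"
    by (auto simp: min.commute max.commute)
  then show ?thesis
    unfolding horseshoe_on_def using u12 assms(4)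
    by (intro exI[of _ p] exI[of _ u1] exI[of _ u2] exI[of _ q]) auto
qed

lemma transitive_on_Icc_horseshoe_if_preimage:
  fixes g :: "real \<Rightarrow> real"
  assumes cont: "continuous_on {\<alpha>..\<beta>} g" and into: "g ` {\<alpha>..\<beta>} \<subseteq> {\<alpha>..\<beta>}"
    and trans: "transitive_on {\<alpha>..\<beta>} (\<lambda>n. g ^^ n)"
    and "\<alpha> < y" "y < \<beta>" "y \<noteq> z" "g y = z" "g z = z"
  obtains n where "n \<ge> 1" "horseshoe_on {\<alpha>..\<beta>} (g ^^ n)"
proof -
  have "y \<in> {\<alpha>..\<beta>}"
    using \<open>\<alpha> < y\<close> \<open>y < \<beta>\<close> by auto
  then have "z \<in> {\<alpha>..\<beta>}"
    using into \<open>g y = z\<close> by blast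
  then have z: "\<alpha> \<le> z" "z \<le> \<beta>"
    by auto
  have iterates: "(g ^^ n) y = z" "(g ^^ n) z = z" if "n \<ge> 1" for n
    using that \<open>g y = z\<close> funpow_fixed_point[of g z, OF \<open>g z = z\<close>]
    by (auto simp: funpow_Suc_right simp del: funpow.simps dest!: Suc_le_D)
  have cont_n: "continuous_on {a..b} (g ^^ n)" if "\<alpha> \<le> a" "b \<le> \<beta>" for a b n
    using that by (auto intro: continuous_on_subset[OF continuous_on_funpow[OF cont into]])
  consider "y < z" | "z < y"
    using \<open>y \<noteq> z\<close> by linarith
  then show ?thesis
  proof cases
    case 1
    obtain n u where "n \<ge> 1" "y < u" "u < z" "(g ^^ n) u < y"
      by (rule transitive_on_IccE[OF trans, of y z \<alpha> y]) (use 1 z \<open>\<alpha> < y\<close> in auto)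
    then have "horseshoe_on {\<alpha>..\<beta>} (g ^^ n)"
      using iterates[OF \<open>n \<ge> 1\<close>] \<open>\<alpha> < y\<close> z
      by (intro horseshoe_on_if_fold[of y z _ u] cont_n) auto
    with \<open>n \<ge> 1\<close> show ?thesis
      by (rule that)
  next
    case 2
    obtain n u where "n \<ge> 1" "z < u" "u < y" "y < (g ^^ n) u"
      by (rule transitive_on_IccE[OF trans, of z y y \<beta>]) (use 2 z \<open>y < \<beta>\<close> in auto)
    then have "horseshoe_on {\<alpha>..\<beta>} (g ^^ n)"
      using iterates[OF \<open>n \<ge> 1\<close>] \<open>y < \<beta>\<close> z
      by (intro horseshoe_on_if_fold[of z y _ u] cont_n) auto
    with \<open>n \<ge> 1\<close> show ?thesis
      by (rule that)
  qed
qed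

lemma transitive_on_Icc_swap_if_no_preimage:
  fixes g :: "real \<Rightarrow> real"
  assumes cont: "continuous_on {\<alpha>..\<beta>} g" and into: "g ` {\<alpha>..\<beta>} \<subseteq> {\<alpha>..\<beta>}"
    and trans: "transitive_on {\<alpha>..\<beta>} (\<lambda>n. g ^^ n)"
    and z: "\<alpha> < z" "z < \<beta>"
    and no_preimage: "\<And>y. \<alpha> < y \<Longrightarrow> y < \<beta> \<Longrightarrow> g y = z \<Longrightarrow> y = z"
  shows "g ` {\<alpha>..z} \<subseteq> {z..\<beta>}" "g ` {z..\<beta>} \<subseteq> {\<alpha>..z}"
proof -
  have gI: "\<alpha> \<le> g x" "g x \<le> \<beta>" if "\<alpha> \<le> x" "x \<le> \<beta>" for x
    using into that by (auto simp: image_subset_iff)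
  have sign: "(\<forall>x\<in>{a..b}. z \<le> g x) \<or> (\<forall>x\<in>{a..b}. g x \<le> z)"
    if "\<alpha> \<le> a" "b \<le> \<beta>" "z \<notin> {a<..<b}" for a b
  proof -
    have "(\<forall>x\<in>{a..b}. 0 \<le> g x - z) \<or> (\<forall>x\<in>{a..b}. g x - z \<le> 0)"
    proof (rule IVT_sign_constant)
      show "continuous_on {a..b} (\<lambda>x. g x - z)"
        using that by (intro continuous_intros continuous_on_subset[OF cont]) auto
      show "g x - z \<noteq> 0" if "a < x" "x < b" for x
        using no_preimage[of x] that \<open>\<alpha> \<le> a\<close> \<open>b \<le> \<beta>\<close> \<open>z \<notin> {a<..<b}\<close> by auto
    qed
    then show ?thesis
      by auto
  qed
  have "\<not> (\<forall>x\<in>{\<alpha>..z}. g x \<le> z)"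
  proof
    assume "\<forall>x\<in>{\<alpha>..z}. g x \<le> z"
    then have "g ` {\<alpha>..z} \<subseteq> {\<alpha>..z}"
      using gI z by (auto simp: image_subset_iff intro: gI)
    then show False
      by (rule transitive_on_Icc_no_invariant_subinterval[OF trans]) (use z in auto)
  qed
  with sign[of \<alpha> z] z show "g ` {\<alpha>..z} \<subseteq> {z..\<beta>}"
    using gI z by (auto simp: image_subset_iff intro: gI)
  have "\<not> (\<forall>x\<in>{z..\<beta>}. z \<le> g x)"
  proof
    assume "\<forall>x\<in>{z..\<beta>}. z \<le> g x"
    then have "g ` {z..\<beta>} \<subseteq> {z..\<beta>}"
      using gI z by (auto simp: image_subset_iff intro: gI)
    then show False
      by (rule transitive_on_Icc_no_invariant_subinterval[OF trans]) (use z in auto)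
  qed
  with sign[of z \<beta>] z show "g ` {z..\<beta>} \<subseteq> {\<alpha>..z}"
    using gI z by (auto simp: image_subset_iff intro: gI)
qed

lemma transitive_on_Icc_horseshoe_or_swap:
  fixes g :: "real \<Rightarrow> real"
  assumes "\<alpha> < \<beta>" "continuous_on {\<alpha>..\<beta>} g" "g ` {\<alpha>..\<beta>} \<subseteq> {\<alpha>..\<beta>}"
    and "transitive_on {\<alpha>..\<beta>} (\<lambda>n. g ^^ n)"
  shows "(\<exists>n\<ge>1. horseshoe_on {\<alpha>..\<beta>} (g ^^ n)) \<or>
    (\<exists>z. \<alpha> < z \<and> z < \<beta> \<and> g z = z \<and> g ` {\<alpha>..z} \<subseteq> {z..\<beta>} \<and> g ` {z..\<beta>} \<subseteq> {\<alpha>..z})"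
proof -
  obtain z where z: "\<alpha> < z" "z < \<beta>" "g z = z"
    by (rule transitive_on_Icc_fixed_point[OF assms])
  show ?thesis
  proof (cases "\<exists>y. \<alpha> < y \<and> y < \<beta> \<and> y \<noteq> z \<and> g y = z")
    case True
    then obtain y where "\<alpha> < y" "y < \<beta>" "y \<noteq> z" "g y = z"
      by blast
    then obtain n where "n \<ge> 1" "horseshoe_on {\<alpha>..\<beta>} (g ^^ n)"
      using z(3) by (rule transitive_on_Icc_horseshoe_if_preimage[OF assms(2-4)])
    then show ?thesis
      by blast
  next
    case False
    then have "y = z" if "\<alpha> < y" "y < \<beta>" "g y = z" for y
      using that by blast
    with z show ?thesis
      using transitive_on_Icc_swap_if_no_preimage[OF assms(2-4) z(1,2)] by blast
  qed
qed

lemma transitive_on_square_if_swap: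
  fixes g :: "real \<Rightarrow> real"
  assumes trans: "transitive_on {\<alpha>..\<beta>} (\<lambda>n. g ^^ n)" and "\<alpha> < z" "z < \<beta>"
    and swap: "g ` {\<alpha>..z} \<subseteq> {z..\<beta>}" "g ` {z..\<beta>} \<subseteq> {\<alpha>..z}"
  shows "transitive_on {\<alpha>..z} (\<lambda>n. (g ^^ 2) ^^ n)"
proof (rule transitive_on_IccI[OF \<open>\<alpha> < z\<close>])
  fix a b c d :: real
  assume ab: "\<alpha> \<le> a" "a < b" "b \<le> z" and cd: "\<alpha> \<le> c" "c < d" "d \<le> z"
  obtain n x where n: "n \<ge> 1" "a < x" "x < b" "c < (g ^^ n) x" "(g ^^ n) x < d"
    by (rule transitive_on_IccE[OF trans, of a b c d]) (use ab cd \<open>z < \<beta>\<close> in auto)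
  have "x \<in> {\<alpha>..z}"
    using n ab by auto
  have "even n"
  proof (rule ccontr)
    assume "odd n"
    then obtain m where "n = Suc (2 * m)"
      by (rule oddE) simp
    then have "(g ^^ n) x \<in> {z..\<beta>}"
      using funpow_alternating[OF swap \<open>x \<in> {\<alpha>..z}\<close>] by blast
    with n(5) cd(3) show False
      by auto
  qed
  then obtain m where m: "n = 2 * m"
    by (rule evenE)
  then have "(g ^^ 2) ^^ m = g ^^ n" "m \<ge> 1"
    using n(1) by (simp_all add: funpow_mult)
  then show "\<exists>m\<ge>1. \<exists>x. a < x \<and> x < b \<and> c < ((g ^^ 2) ^^ m) x \<and> ((g ^^ 2) ^^ m) x < d"
    using n(2-5) by (intro exI[of _ m] conjI exI[of _ x]) simp_all
qed

lemma transitive_on_Icc_horseshoe_if_swap: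
  fixes g :: "real \<Rightarrow> real"
  assumes cont: "continuous_on {\<alpha>..\<beta>} g" and into: "g ` {\<alpha>..\<beta>} \<subseteq> {\<alpha>..\<beta>}"
    and trans: "transitive_on {\<alpha>..\<beta>} (\<lambda>n. g ^^ n)"
    and z: "\<alpha> < z" "z < \<beta>" "g z = z"
    and swap: "g ` {\<alpha>..z} \<subseteq> {z..\<beta>}" "g ` {z..\<beta>} \<subseteq> {\<alpha>..z}"
  obtains p where "p \<ge> 1" "horseshoe_on {\<alpha>..\<beta>} (g ^^ p)"
proof -
  \<comment> \<open>For \<open>g\<^sup>2\<close> on \<open>[\<alpha>, z]\<close> the fixed point \<open>z\<close> is an end point, so the swap alternative is excluded.\<close>
  have into2: "(g ^^ 2) ` {\<alpha>..z} \<subseteq> {\<alpha>..z}"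
    using funpow_alternating[OF swap, of _ 1] by auto
  have "continuous_on {\<alpha>..z} (g ^^ 2)"
    using z by (intro continuous_on_subset[OF continuous_on_funpow[OF cont into]]) auto
  moreover have "transitive_on {\<alpha>..z} (\<lambda>n. (g ^^ 2) ^^ n)"
    by (rule transitive_on_square_if_swap[OF trans z(1,2) swap])
  ultimately consider "\<exists>k\<ge>1. horseshoe_on {\<alpha>..z} ((g ^^ 2) ^^ k)"
    | z' where "z' < z" "(g ^^ 2) ` {z'..z} \<subseteq> {\<alpha>..z'}"
    using transitive_on_Icc_horseshoe_or_swap[OF \<open>\<alpha> < z\<close> _ into2] by blast
  then show ?thesis
  proof cases
    case 1
    then obtain k where "k \<ge> 1" "horseshoe_on {\<alpha>..z} (g ^^ (2 * k))"
      by (auto simp: funpow_mult)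
    moreover have "{\<alpha>..z} \<subseteq> {\<alpha>..\<beta>}"
      using \<open>z < \<beta>\<close> by auto
    ultimately show ?thesis
      using that[of "2 * k"] horseshoe_on_mono by simp
  next
    case (2 z')
    then have "z \<in> {z'..z}"
      by auto
    with 2(2) have "(g ^^ 2) z \<in> {\<alpha>..z'}"
      by blast
    moreover have "(g ^^ 2) z = z"
      using \<open>g z = z\<close> by (simp add: numeral_2_eq_2)
    ultimately show ?thesis
      using \<open>z' < z\<close> by auto
  qed
qed

theorem transitive_on_Icc_horseshoe:
  fixes g :: "real \<Rightarrow> real"
  assumes "\<alpha> < \<beta>" "continuous_on {\<alpha>..\<beta>} g" "g ` {\<alpha>..\<beta>} \<subseteq> {\<alpha>..\<beta>}"
    and "transitive_on {\<alpha>..\<beta>} (\<lambda>n. g ^^ n)"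
  obtains p where "p \<ge> 1" "horseshoe_on {\<alpha>..\<beta>} (g ^^ p)"
  using transitive_on_Icc_horseshoe_or_swap[OF assms]
    transitive_on_Icc_horseshoe_if_swap[OF assms(2-4)] that by blast

lemma transitive_on_surj:
  fixes f :: "'a::metric_space \<Rightarrow> 'a"
  assumes "compact S" "continuous_on S f" "f ` S \<subseteq> S"
    and trans: "transitive_on S (\<lambda>n. f ^^ n)"
  shows "f ` S = S"
proof (rule ccontr)
  assume "f ` S \<noteq> S"
  then have "S - f ` S \<noteq> {}" "S \<noteq> {}"
    using assms(3) by blast+
  moreover have "openin (top_of_set S) (S - f ` S)"
    using compact_imp_closed[OF compact_continuous_image[OF assms(2,1)]] assms(3)
    by (intro openin_diff openin_subtopology_self closed_subset)
  ultimately have "\<exists>n\<ge>1. (f ^^ n) ` S \<inter> (S - f ` S) \<noteq> {}"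
    using trans unfolding transitive_on_def by simp
  then obtain n where "n \<ge> 1" and meets: "(f ^^ n) ` S \<inter> (S - f ` S) \<noteq> {}"
    by blast
  then obtain k where "n = Suc k"
    by (cases n) auto
  then have "(f ^^ n) ` S = f ` ((f ^^ k) ` S)"
    by (simp add: image_comp)
  also have "\<dots> \<subseteq> f ` S"
    by (rule image_mono[OF funpow_image_subset[OF assms(3)]])
  finally show False
    using meets by blast
qed

lemma horseshoe_itinerary:
  fixes J :: "bool \<Rightarrow> 'a set"
  assumes cover: "\<And>e e'. J e' \<subseteq> h ` J e" and nonempty: "\<And>e. J e \<noteq> {}"
  shows "\<exists>y. \<forall>m\<le>n. (h ^^ m) y \<in> J (w m)"
proof (induction n arbitrary: w)
  case 0
  then show ?case
    using nonempty by auto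
next
  case (Suc n)
  obtain y' where y': "\<forall>m\<le>n. (h ^^ m) y' \<in> J (w (Suc m))"
    using Suc.IH[of "\<lambda>m. w (Suc m)"] by blast
  then have "y' \<in> h ` J (w 0)"
    using cover[of "w 1" "w 0"] by auto
  then obtain y where y: "y \<in> J (w 0)" "h y = y'"
    by blast
  have "(h ^^ m) y \<in> J (w m)" if "m \<le> Suc n" for m
  proof (cases m)
    case (Suc k)
    then show ?thesis
      using y' y(2) that by (simp add: funpow_Suc_right del: funpow.simps)
  qed (use y in simp)
  then show ?case
    by blast
qed

section \<open>Horseshoes and the sequence entropy of the induced map\<close>

definition level_set :: "nat \<Rightarrow> nat \<Rightarrow> real set" where
  "level_set K s = {y. (s = 0 \<or> real s - 1 < K * y) \<and> (s = K \<or> K * y < real s + 1)}"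

lemma open_level_set: "open (level_set K s)"
proof -
  have "level_set K s = (if s = 0 then UNIV else {y. real s - 1 < K * y}) \<inter>
      (if s = K then UNIV else {y. K * y < real s + 1})"
    by (auto simp: level_set_def)
  then show ?thesis
    by (auto intro!: open_Collect_less continuous_intros)
qed

lemma level_set_cover: "\<exists>s\<le>K. y \<in> level_set K s"
proof -
  consider "K * y < 0" | "K \<le> K * y" | "0 \<le> K * y" "K * y < K"
    by linarith
  then show ?thesis
  proof cases
    case 1
    then show ?thesis
      by (intro exI[of _ 0]) (auto simp: level_set_def)
  next
    case 2
    then show ?thesis
      by (intro exI[of _ K]) (auto simp: level_set_def)
  next
    case 3
    define s where "s = nat \<lfloor>K * y\<rfloor>"
    have "real s \<le> K * y" "K * y < real s + 1"
      using 3(1) by (auto simp: s_def)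
    moreover have "s \<le> K"
      using 3(2) by (auto simp: s_def nat_le_iff floor_le_iff)
    ultimately show ?thesis
      by (intro exI[of _ s]) (auto simp: level_set_def)
  qed
qed

lemma level_set_unique:
  assumes "K > 0" "c \<le> K" "real c / K \<in> level_set K s"
  shows "c = s"
proof -
  have "s = 0 \<or> real s < real c + 1" "s = K \<or> real c < real s + 1"
    using assms(1,3) by (auto simp: level_set_def)
  then have "s = 0 \<or> s \<le> c" "s = K \<or> c \<le> s"
    by linarith+
  with assms(2) show ?thesis
    by auto
qed

definition integral_cover :: "(real \<Rightarrow> real) \<Rightarrow> nat \<Rightarrow> real measure set set" where
  "integral_cover \<phi> K = (\<lambda>s. {\<mu>\<in>probI. (\<integral>x. \<phi> x \<partial>\<mu>) \<in> level_set K s}) ` {..K}"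

lemma integral_cover_in_open_covers:
  assumes "continuous_on unitI \<phi>"
  shows "integral_cover \<phi> K \<in> open_covers weak_star"
proof -
  have "\<mu> \<in> \<Union>(integral_cover \<phi> K)" if "\<mu> \<in> probI" for \<mu>
  proof -
    obtain s where "s \<le> K" "(\<integral>x. \<phi> x \<partial>\<mu>) \<in> level_set K s"
      using level_set_cover by blast
    with that show ?thesis
      unfolding integral_cover_def by blast
  qed
  then show ?thesis
    unfolding open_covers_def topspace_weak_star
    using openin_weak_star_integral[OF assms open_level_set]
    by (auto simp: integral_cover_def)
qed

lemma join_integral_cover_levels:
  assumes "W \<in> join_pre weak_star (\<lambda>_. hat f) A (integral_cover \<phi> K) n"
    and "\<mu> \<in> W" "\<nu> \<in> W" "i < n" "f \<in> borelI \<rightarrow>\<^sub>M borelI"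
  obtains s where "(\<integral>x. \<phi> x \<partial>hat (f ^^ A i) \<mu>) \<in> level_set K s"
    "(\<integral>x. \<phi> x \<partial>hat (f ^^ A i) \<nu>) \<in> level_set K s"
proof -
  obtain C where C: "C i \<in> integral_cover \<phi> K"
    "\<And>x. x \<in> W \<Longrightarrow> comp_seq (\<lambda>_. hat f) (A i) x \<in> C i"
    using join_preE[OF assms(1)] assms(4) by metis
  obtain s where s: "C i = {\<mu>\<in>probI. (\<integral>x. \<phi> x \<partial>\<mu>) \<in> level_set K s}"
    using C(1) unfolding integral_cover_def by blast
  have "W \<subseteq> probI"
    using assms(1) by (auto simp: join_pre_def topspace_weak_star)
  then have "comp_seq (\<lambda>_. hat f) (A i) x = hat (f ^^ A i) x" if "x \<in> W" for x
    using comp_seq_hat[OF assms(5)] that by (auto simp: comp_seq_const)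
  then show ?thesis
    using that[of s] C(2) assms(2,3) unfolding s by auto
qed

lemma join_integral_cover_finite_cover:
  assumes "continuous_on unitI \<phi>" "f \<in> borelI \<rightarrow>\<^sub>M borelI"
  shows "finite (join_pre weak_star (\<lambda>_. hat f) A (integral_cover \<phi> K) n)"
    "\<Union>(join_pre weak_star (\<lambda>_. hat f) A (integral_cover \<phi> K) n) = topspace weak_star"
proof -
  have orbit: "comp_seq (\<lambda>_. hat f) t \<nu> \<in> topspace weak_star" if "\<nu> \<in> topspace weak_star" for t \<nu>
    using that by (induction t) (auto intro: hat_in_probI assms(2) simp: topspace_weak_star)
  have "finite (integral_cover \<phi> K)" "\<Union>(integral_cover \<phi> K) = topspace weak_star"
    using integral_cover_in_open_covers[OF assms(1), of K] by (simp_all add: open_covers_def)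
  from join_pre_finite_cover[OF this orbit]
  show "finite (join_pre weak_star (\<lambda>_. hat f) A (integral_cover \<phi> K) n)"
    "\<Union>(join_pre weak_star (\<lambda>_. hat f) A (integral_cover \<phi> K) n) = topspace weak_star"
    by blast+
qed

lemma mod_eq_imp_eq_add_mult:
  fixes t0 t p :: nat
  assumes "t0 \<le> t" "t mod p = t0 mod p"
  shows "t = t0 + p * ((t - t0) div p)"
  using assms mod_eq_dvd_iff_nat[OF assms(1), of p] by simp

context
  fixes f :: "real \<Rightarrow> real" and p :: nat and a0 b0 a1 b1 :: real
  assumes cont: "continuous_on unitI f" and onto: "f ` unitI = unitI" and "p > 0"
    and intervals: "0 \<le> a0" "a0 < b0" "b0 < a1" "a1 < b1" "b1 \<le> 1"
    and horseshoe: "{a0..b0} \<union> {a1..b1} \<subseteq> (f ^^ p) ` {a0..b0}"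
      "{a0..b0} \<union> {a1..b1} \<subseteq> (f ^^ p) ` {a1..b1}"
begin

definition branch :: "bool \<Rightarrow> real set" where
  "branch e = (if e then {a1..b1} else {a0..b0})"

lemma branch_subset: "branch e \<subseteq> unitI"
  using intervals by (auto simp: branch_def)

lemma itinerary_exists_progression:
  obtains x where "x \<in> unitI" "\<And>m. m \<le> N \<Longrightarrow> (f ^^ (t0 + p * m)) x \<in> branch (w m)"
proof -
  have "\<exists>y. \<forall>m\<le>N. ((f ^^ p) ^^ m) y \<in> branch (w m)"
    by (rule horseshoe_itinerary) (use horseshoe intervals in \<open>auto simp: branch_def\<close>)
  then obtain y where y: "\<And>m. m \<le> N \<Longrightarrow> ((f ^^ p) ^^ m) y \<in> branch (w m)"
    by blast
  have "y \<in> branch (w 0)"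
    using y[of 0] by simp
  then have "y \<in> unitI"
    using branch_subset by blast
  then have "y \<in> (f ^^ t0) ` unitI"
    using funpow_image_eq[OF onto] by simp
  then obtain x where x: "x \<in> unitI" "(f ^^ t0) x = y"
    by blast
  have "(f ^^ (t0 + p * m)) x = ((f ^^ p) ^^ m) y" for m
  proof -
    have "(f ^^ (t0 + p * m)) x = (f ^^ (p * m)) ((f ^^ t0) x)"
      by (simp only: add.commute[of t0] funpow_add comp_apply)
    with x(2) show ?thesis
      by (simp add: funpow_mult)
  qed
  with x(1) y show ?thesis
    using that by simp
qed

lemma itinerary_exists:
  assumes "finite T" "\<And>t. t \<in> T \<Longrightarrow> t mod p = r"
  obtains x where "x \<in> unitI" "\<And>t. t \<in> T \<Longrightarrow> (f ^^ t) x \<in> branch (\<epsilon> t)"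
proof (cases "T = {}")
  case True
  then show ?thesis
    using that[of 0] by auto
next
  case False
  define t0 where "t0 = Min T"
  have t0: "t0 \<in> T" "\<And>t. t \<in> T \<Longrightarrow> t0 \<le> t"
    using assms(1) False by (auto simp: t0_def)
  define m where "m t = (t - t0) div p" for t
  have t_eq: "t = t0 + p * m t" "m t \<le> Max T" if "t \<in> T" for t
  proof -
    show "t = t0 + p * m t"
      using assms(2)[OF that] assms(2)[OF t0(1)] t0(2)[OF that] by (simp add: m_def mod_eq_imp_eq_add_mult)
    have "m t \<le> t"
      unfolding m_def by (meson diff_le_self div_le_dividend le_trans)
    then show "m t \<le> Max T"
      using Max_ge[OF assms(1) that] by linarith
  qed
  obtain x where x: "x \<in> unitI" "\<And>k. k \<le> Max T \<Longrightarrow> (f ^^ (t0 + p * k)) x \<in> branch (\<epsilon> (t0 + p * k))"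
    using itinerary_exists_progression[of "Max T" t0 "\<lambda>k. \<epsilon> (t0 + p * k)"] by metis
  show ?thesis
  proof (rule that[OF x(1)])
    fix t assume "t \<in> T"
    then show "(f ^^ t) x \<in> branch (\<epsilon> t)"
      using x(2)[OF t_eq(2)] by (simp flip: t_eq(1))
  qed
qed

definition separator :: "real \<Rightarrow> real" where
  "separator x = max 0 (min 1 ((x - b0) / (a1 - b0)))"

lemma continuous_separator: "continuous_on unitI separator"
  unfolding separator_def by (intro continuous_intros) (use intervals in auto)

lemma separator_branch: "x \<in> branch e \<Longrightarrow> separator x = (if e then 1 else 0)"
  using intervals by (auto simp: branch_def separator_def field_simps)

lemma pattern_measure_exists:
  fixes K :: nat and c :: "nat \<Rightarrow> nat"
  assumes "finite T" "\<And>t. t \<in> T \<Longrightarrow> t mod p = r" "K > 0" "\<And>t. t \<in> T \<Longrightarrow> c t \<le> K"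
  obtains \<mu> where "\<mu> \<in> probI" "\<And>t. t \<in> T \<Longrightarrow> (\<integral>x. separator x \<partial>hat (f ^^ t) \<mu>) = c t / K"
proof -
  have "\<exists>x. x \<in> unitI \<and> (\<forall>t\<in>T. (f ^^ t) x \<in> branch (j < c t))" for j
    using itinerary_exists[OF assms(1,2), where \<epsilon> = "\<lambda>t. j < c t"] by metis
  then obtain X where X: "\<And>j. X j \<in> unitI" "\<And>j t. t \<in> T \<Longrightarrow> (f ^^ t) (X j) \<in> branch (j < c t)"
    by metis
  have into: "f ` unitI \<subseteq> unitI"
    using onto by simp
  have integral: "(\<integral>x. separator x \<partial>hat (f ^^ t) (empirical_measure K X)) = c t / K" if "t \<in> T" for t
  proof -
    have "((f ^^ t) \<circ> X) j \<in> unitI" for j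
      using subsetD[OF branch_subset X(2)[OF that]] by simp
    then have "(\<integral>x. separator x \<partial>hat (f ^^ t) (empirical_measure K X)) =
        (\<Sum>j<K. separator ((f ^^ t) (X j))) / K"
      by (simp add: hat_empirical_measure[OF X(1) measurable_compose_n[OF measurable_borelI[OF cont into]]]
          integral_empirical_measure[OF assms(3) _ continuous_separator])
    also have "(\<Sum>j<K. separator ((f ^^ t) (X j))) = (\<Sum>j<K. if j < c t then 1 else 0)"
      by (rule sum.cong) (simp_all add: separator_branch[OF X(2)[OF that]])
    also have "\<dots> = card ({..<K} \<inter> {j. j < c t})"
      by (simp add: sum.If_cases)
    also have "{..<K} \<inter> {j. j < c t} = {..<c t}"
      using assms(4)[OF that] by auto
    finally show ?thesis
      by simp
  qed
  show ?thesis
    by (rule that[OF empirical_measure_in_probI[OF X(1)] integral])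
qed

lemma pattern_measures_exist:
  fixes K :: nat
  assumes "finite T" "\<And>t. t \<in> T \<Longrightarrow> t mod p = r" "K > 0"
  obtains \<mu> where "\<And>c. c \<in> T \<rightarrow>\<^sub>E {..K} \<Longrightarrow> \<mu> c \<in> probI"
    "\<And>c t. c \<in> T \<rightarrow>\<^sub>E {..K} \<Longrightarrow> t \<in> T \<Longrightarrow> (\<integral>x. separator x \<partial>hat (f ^^ t) (\<mu> c)) = c t / K"
proof -
  have "\<exists>\<mu>. \<mu> \<in> probI \<and> (\<forall>t\<in>T. (\<integral>x. separator x \<partial>hat (f ^^ t) \<mu>) = c t / K)"
    if "c \<in> T \<rightarrow>\<^sub>E {..K}" for c
    using pattern_measure_exists[OF assms, of c] that by (metis PiE_mem atMost_iff)
  then have "\<exists>\<mu>. \<forall>c\<in>T \<rightarrow>\<^sub>E {..K}. \<mu> c \<in> probI \<and>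
      (\<forall>t\<in>T. (\<integral>x. separator x \<partial>hat (f ^^ t) (\<mu> c)) = c t / K)"
    by (intro bchoice ballI)
  then obtain \<mu> where \<mu>: "\<forall>c\<in>T \<rightarrow>\<^sub>E {..K}. \<mu> c \<in> probI \<and>
      (\<forall>t\<in>T. (\<integral>x. separator x \<partial>hat (f ^^ t) (\<mu> c)) = c t / K)"
    by blast
  show ?thesis
    by (rule that[of \<mu>]) (use \<mu> in auto)
qed

lemma card_le_cover_num_join:
  assumes "K > 0" "inj A"
  shows "(K + 1) ^ card {i. i < n \<and> A i mod p = r} \<le>
    cover_num weak_star (join_pre weak_star (\<lambda>_. hat f) A (integral_cover separator K) n)"
proof -
  define S where "S = {i. i < n \<and> A i mod p = r}"
  define P where "P = A ` S \<rightarrow>\<^sub>E {..K}"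
  let ?J = "join_pre weak_star (\<lambda>_. hat f) A (integral_cover separator K) n"
  have "finite S"
    by (simp add: S_def)
  then have card_P: "card P = (K + 1) ^ card S"
    using inj_on_subset[OF assms(2)] by (simp add: P_def card_PiE card_image)
  have f_meas: "f \<in> borelI \<rightarrow>\<^sub>M borelI"
    using onto by (intro measurable_borelI cont) simp
  obtain \<mu> where \<mu>: "\<And>c. c \<in> P \<Longrightarrow> \<mu> c \<in> probI"
    "\<And>c t. c \<in> P \<Longrightarrow> t \<in> A ` S \<Longrightarrow> (\<integral>x. separator x \<partial>hat (f ^^ t) (\<mu> c)) = c t / K"
    unfolding P_def by (rule pattern_measures_exist[of "A ` S" r K]) (use \<open>finite S\<close> assms(1) in \<open>auto simp: S_def\<close>)
  have "card P \<le> cover_num weak_star ?J"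
  proof (rule card_le_cover_num[OF join_integral_cover_finite_cover[OF continuous_separator f_meas]])
    show "\<mu> ` P \<subseteq> topspace weak_star"
      using \<mu>(1) by (auto simp: topspace_weak_star)
    fix W c c'
    assume W: "W \<in> ?J" and c: "c \<in> P" "\<mu> c \<in> W" and c': "c' \<in> P" "\<mu> c' \<in> W"
    show "c = c'"
    proof (rule PiE_ext[OF c(1)[unfolded P_def] c'(1)[unfolded P_def]])
      fix t assume "t \<in> A ` S"
      then obtain i where "i < n" "t = A i"
        by (auto simp: S_def)
      obtain s where "(\<integral>x. separator x \<partial>hat (f ^^ A i) (\<mu> c)) \<in> level_set K s"
        "(\<integral>x. separator x \<partial>hat (f ^^ A i) (\<mu> c')) \<in> level_set K s"
        by (rule join_integral_cover_levels[OF W c(2) c'(2) \<open>i < n\<close> f_meas])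
      then have "real (c t) / K \<in> level_set K s" "real (c' t) / K \<in> level_set K s"
        using \<mu>(2)[OF c(1) \<open>t \<in> A ` S\<close>] \<mu>(2)[OF c'(1) \<open>t \<in> A ` S\<close>] \<open>t = A i\<close> by simp_all
      moreover have "c t \<le> K" "c' t \<le> K"
        using c(1) c'(1) \<open>t \<in> A ` S\<close> by (auto simp: P_def)
      ultimately have "c t = s" "c' t = s"
        using level_set_unique[OF assms(1)] by blast+
      then show "c t = c' t"
        by simp
    qed
  qed
  with card_P show ?thesis
    by (simp add: S_def)
qed

lemma seq_entropy_hat_ge:
  assumes "K > 0" "inj A"
  shows "ereal (ln (real K + 1) / p) \<le> seq_entropy weak_star (\<lambda>_. hat f) A"
proof (rule seq_entropy_ge[OF integral_cover_in_open_covers[OF continuous_separator]])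
  let ?N = "\<lambda>n. cover_num weak_star (join_pre weak_star (\<lambda>_. hat f) A (integral_cover separator K) n)"
  show "\<forall>\<^sub>F n in sequentially. ln (real K + 1) / p \<le> ln (real (?N n)) / n"
  proof (rule eventually_sequentiallyI)
    fix n :: nat
    assume "n \<ge> 1"
    obtain r where "n \<le> p * card {i. i < n \<and> A i mod p = r}"
      using pigeonhole_fiber_card[of p "\<lambda>i. A i mod p" n] \<open>p > 0\<close> by auto
    moreover define k where "k = card {i. i < n \<and> A i mod p = r}"
    ultimately have "n \<le> p * k"
      by simp
    have "(K + 1) ^ k \<le> ?N n"
      unfolding k_def by (rule card_le_cover_num_join[OF assms])
    then have "real ((K + 1) ^ k) \<le> real (?N n)"
      by (simp only: of_nat_le_iff)
    then have "ln (real ((K + 1) ^ k)) \<le> ln (real (?N n))"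
      by (rule ln_mono) simp
    then have "k * ln (real K + 1) \<le> ln (real (?N n))"
      by (simp add: ln_realpow add.commute)
    have "n * ln (real K + 1) \<le> real (p * k) * ln (real K + 1)"
    proof (rule mult_right_mono)
      show "real n \<le> real (p * k)"
        using \<open>n \<le> p * k\<close> by (simp only: of_nat_le_iff)
    qed simp
    also have "\<dots> = p * (k * ln (real K + 1))"
      by simp
    also have "\<dots> \<le> p * ln (real (?N n))"
      using \<open>k * ln (real K + 1) \<le> ln (real (?N n))\<close> by (rule mult_left_mono) simp
    finally have "n * ln (real K + 1) \<le> p * ln (real (?N n))" .
    then show "ln (real K + 1) / p \<le> ln (real (?N n)) / n"
      using \<open>n \<ge> 1\<close> \<open>p > 0\<close> by (simp add: field_simps)
  qed
qed

end

theorem seq_entropy_hat_transitive: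
  assumes cont: "continuous_on unitI f" and into: "f ` unitI \<subseteq> unitI"
    and "top_transitive (\<lambda>n. f)" and "inj A"
  shows "seq_entropy weak_star (\<lambda>n. hat f) A = \<infinity>"
proof -
  have trans: "transitive_on unitI (\<lambda>n. f ^^ n)"
    using assms(3) by (simp add: top_transitive_iff_transitive_on comp_seq_const)
  have onto: "f ` unitI = unitI"
    by (rule transitive_on_surj[OF compact_Icc cont into trans])
  obtain p where "p \<ge> 1" "horseshoe_on unitI (f ^^ p)"
    by (rule transitive_on_Icc_horseshoe[OF _ cont into trans]) simp
  then obtain a0 b0 a1 b1 where "a0 < b0" "b0 < a1" "a1 < b1" "{a0..b1} \<subseteq> unitI"
    and horseshoe: "{a0..b0} \<union> {a1..b1} \<subseteq> (f ^^ p) ` {a0..b0}" "{a0..b0} \<union> {a1..b1} \<subseteq> (f ^^ p) ` {a1..b1}"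
    unfolding horseshoe_on_def by blast
  then have "0 \<le> a0" "b1 \<le> 1"
    by auto
  show ?thesis
  proof (rule ereal_top)
    fix B :: real
    obtain n :: nat where "exp (B * p) \<le> n"
      using real_arch_simple by blast
    define K where "K = Suc n"
    have "K > 0" "exp (B * p) \<le> real K + 1"
      using \<open>exp (B * p) \<le> n\<close> by (simp_all add: K_def)
    then have "B * p \<le> ln (real K + 1)"
      using ln_mono[of "exp (B * p)" "real K + 1"] by simp
    then have "ereal B \<le> ereal (ln (real K + 1) / p)"
      using \<open>p \<ge> 1\<close> by (simp add: field_simps)
    also have "\<dots> \<le> seq_entropy weak_star (\<lambda>n. hat f) A"
      using \<open>p \<ge> 1\<close> \<open>0 \<le> a0\<close> \<open>a0 < b0\<close> \<open>b0 < a1\<close> \<open>a1 < b1\<close> \<open>b1 \<le> 1\<close> horseshoe \<open>K > 0\<close> \<open>inj A\<close>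
      by (intro seq_entropy_hat_ge[OF cont onto]) auto
    finally show "ereal B \<le> seq_entropy weak_star (\<lambda>n. hat f) A" .
  qed
qed

section \<open>A transitive sequence with zero sequence entropy\<close>

definition pos_rat :: "nat \<Rightarrow> real" where
  "pos_rat = from_nat_into (\<rat> \<inter> {0<..})"

lemma range_pos_rat: "range pos_rat = \<rat> \<inter> {0<..}"
  unfolding pos_rat_def
  by (rule range_from_nat_into) (auto intro: countable_Int1 countable_rat exI[of _ 1])

lemma pos_rat_pos: "pos_rat k > 0"
  using range_pos_rat by blast

definition power_maps :: "nat \<Rightarrow> real \<Rightarrow> real" where
  "power_maps n =
     (if even n then (\<lambda>x. x powr pos_rat (n div 2)) else (\<lambda>x. x powr (1 / pos_rat (n div 2))))"

lemma power_maps_even: "power_maps (2 * k) = (\<lambda>x. x powr pos_rat k)"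
  and power_maps_odd: "power_maps (Suc (2 * k)) = (\<lambda>x. x powr (1 / pos_rat k))"
  by (simp_all add: power_maps_def)

lemma power_maps_cont_into: "continuous_on unitI (power_maps n) \<and> power_maps n ` unitI \<subseteq> unitI"
proof -
  have "continuous_on unitI (\<lambda>x. x powr r)" if "r > 0" for r :: real
    by (rule continuous_on_powr') (use that in \<open>auto intro: continuous_intros\<close>)
  moreover have "(\<lambda>x. x powr r) ` unitI \<subseteq> unitI" if "r > 0" for r :: real
    using that by (auto intro!: powr_le1)
  ultimately show ?thesis
    unfolding power_maps_def using pos_rat_pos[of "n div 2"] by simp
qed

lemma comp_seq_power_maps:
  assumes "x \<in> unitI"
  shows "comp_seq power_maps (2 * k) x = x" "comp_seq power_maps (Suc (2 * k)) x = x powr pos_rat k"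
proof -
  show even: "comp_seq power_maps (2 * k) x = x" for k
  proof (induction k)
    case (Suc k)
    have "2 * Suc k = Suc (Suc (2 * k))"
      by simp
    with Suc.IH have "comp_seq power_maps (2 * Suc k) x = (x powr pos_rat k) powr (1 / pos_rat k)"
      by (simp add: power_maps_even power_maps_odd)
    also have "\<dots> = x"
      using pos_rat_pos[of k] assms by (simp add: powr_powr)
    finally show ?case .
  qed simp
  show "comp_seq power_maps (Suc (2 * k)) x = x powr pos_rat k"
    using even by (simp add: power_maps_even)
qed

lemma top_transitive_power_maps: "top_transitive power_maps"
  unfolding top_transitive_iff_transitive_on
proof (rule transitive_on_IccI)
  fix a b c d :: real
  assume "0 \<le> a" "a < b" "b \<le> 1" "0 \<le> c" "c < d" "d \<le> 1"
  define x where "x = (a + b) / 2"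
  define y1 where "y1 = (3 * c + d) / 4"
  define y2 where "y2 = (c + 3 * d) / 4"
  have x: "a < x" "x < b" "0 < x" "x < 1" and y: "c < y1" "y1 < y2" "y2 < d" "0 < y1" "y2 < 1"
    using \<open>0 \<le> a\<close> \<open>a < b\<close> \<open>b \<le> 1\<close> \<open>0 \<le> c\<close> \<open>c < d\<close> \<open>d \<le> 1\<close> by (auto simp: x_def y1_def y2_def)
  have "ln x < 0" "ln y1 < ln y2" "ln y2 < 0"
    using x y by simp_all
  then have "0 < ln y2 / ln x" "ln y2 / ln x < ln y1 / ln x"
    by (simp_all add: divide_neg_neg divide_strict_right_mono_neg)
  obtain r where r: "r \<in> \<rat>" "ln y2 / ln x < r" "r < ln y1 / ln x"
    using Rats_dense_in_real[OF \<open>ln y2 / ln x < ln y1 / ln x\<close>] by blast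
  moreover have "0 < r"
    using r(2) \<open>0 < ln y2 / ln x\<close> by linarith
  ultimately obtain k where "pos_rat k = r"
    using range_pos_rat by (metis IntI greaterThan_iff rangeE)
  have "ln y1 < r * ln x" "r * ln x < ln y2"
    using r(2,3) \<open>ln x < 0\<close> by (simp_all add: neg_divide_less_eq neg_less_divide_eq)
  then have "exp (ln y1) < exp (r * ln x)" "exp (r * ln x) < exp (ln y2)"
    by simp_all
  then have "y1 < x powr r" "x powr r < y2"
    using x y by (simp_all add: powr_def)
  moreover have "comp_seq power_maps (Suc (2 * k)) x = x powr r"
    using comp_seq_power_maps(2)[of x k] x \<open>pos_rat k = r\<close> by simp
  ultimately show "\<exists>n\<ge>1. \<exists>x. a < x \<and> x < b \<and> c < comp_seq power_maps n x \<and> comp_seq power_maps n x < d"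
    using x y by (intro exI[of _ "Suc (2 * k)"] conjI exI[of _ x]) auto
qed simp

lemma seq_entropy_power_maps: "seq_entropy weak_star (\<lambda>n. hat (power_maps n)) (\<lambda>i. 2 * i) = 0"
proof (rule seq_entropy_eq_0_if_identity)
  fix i and \<mu> assume "\<mu> \<in> topspace weak_star"
  then have "\<mu> \<in> probI"
    by (simp add: topspace_weak_star)
  moreover have "power_maps n \<in> borelI \<rightarrow>\<^sub>M borelI" for n
    using power_maps_cont_into by (simp add: measurable_borelI)
  ultimately have "comp_seq (\<lambda>n. hat (power_maps n)) (2 * i) \<mu> = hat (comp_seq power_maps (2 * i)) \<mu>"
    by (simp add: comp_seq_hat)
  also have "\<dots> = \<mu>"
    by (rule hat_eq_self[OF \<open>\<mu> \<in> probI\<close> comp_seq_power_maps(1)])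
  finally show "comp_seq (\<lambda>n. hat (power_maps n)) (2 * i) \<mu> = \<mu>" .
qed

theorem theorem5p8:
  shows "(\<forall>f :: real \<Rightarrow> real. continuous_on unitI f \<and> f ` unitI \<subseteq> unitI \<and> top_transitive (\<lambda>n. f)
            \<longrightarrow> (\<forall>A :: nat \<Rightarrow> nat. strict_mono A \<longrightarrow> seq_entropy weak_star (\<lambda>n. hat f) A = \<infinity>))
       \<and> (\<exists>fs :: nat \<Rightarrow> real \<Rightarrow> real. (\<forall>n. continuous_on unitI (fs n) \<and> fs n ` unitI \<subseteq> unitI)
            \<and> top_transitive fs
            \<and> (\<exists>A :: nat \<Rightarrow> nat. strict_mono A \<and> seq_entropy weak_star (\<lambda>n. hat (fs n)) A = 0))"
proof (intro conjI allI impI)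
  fix f :: "real \<Rightarrow> real" and A :: "nat \<Rightarrow> nat"
  assume "continuous_on unitI f \<and> f ` unitI \<subseteq> unitI \<and> top_transitive (\<lambda>n. f)" "strict_mono A"
  then show "seq_entropy weak_star (\<lambda>n. hat f) A = \<infinity>"
    by (intro seq_entropy_hat_transitive strict_mono_imp_inj_on) auto
next
  have "strict_mono (\<lambda>i::nat. 2 * i)"
    by (simp add: strict_mono_def)
  then show "\<exists>fs. (\<forall>n. continuous_on unitI (fs n) \<and> fs n ` unitI \<subseteq> unitI) \<and> top_transitive fs \<and>
      (\<exists>A. strict_mono A \<and> seq_entropy weak_star (\<lambda>n. hat (fs n)) A = 0)"
    using power_maps_cont_into top_transitive_power_maps seq_entropy_power_maps by blast
qed

end
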